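(* Let $\mathcal{X}$ and $\mathcal{Y}$ be probability distributions over a finite set $\Theta$ with $D_{KL}(\mathcal{X}\|\mathcal{Y})\le\kappa$, and let $f:\Theta\to[0,1]$. If $\mathbb{E}_{x\sim\mathcal{X}}[f(x)]=1-\delta$, then $\mathbb{E}_{y\sim\mathcal{Y}}[f(y)]\ge(\delta^\delta e^{-\kappa})^{\frac{1}{1-\delta}}(1-\delta)$.
   Context: $D_{KL}(\mathcal{X}\|\mathcal{Y})=\sum_{\theta\in\mathrm{supp}(\mathcal{X})}\mathcal{X}(\theta)\log(\mathcal{X}(\theta)/\mathcal{Y}(\theta))$ with natural logarithm (it is $\infty$ if $\mathcal{Y}(\theta)=0$ for some $\theta\in\mathrm{supp}(\mathcal{X})$). Conventions: $0^0=1$, and when $\delta=1$ the expression $(\delta^\delta e^{-\kappa})^{\frac{1}{1-\delta}}(1-\delta)$ is defined to be $0$. *)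

theory Defs
  imports "HOL-Analysis.Analysis"
begin

definition is_distr :: "'a set \<Rightarrow> ('a \<Rightarrow> real) \<Rightarrow> bool" where
  "is_distr \<Theta> P \<longleftrightarrow> finite \<Theta> \<and> (\<forall>\<theta>\<in>\<Theta>. P \<theta> \<ge> 0) \<and> (\<Sum>\<theta>\<in>\<Theta>. P \<theta>) = 1"

definition KL :: "'a set \<Rightarrow> ('a \<Rightarrow> real) \<Rightarrow> ('a \<Rightarrow> real) \<Rightarrow> ereal" where
  "KL \<Theta> X Y =
     (if \<exists>\<theta>\<in>\<Theta>. X \<theta> > 0 \<and> Y \<theta> = 0 then \<infinity>
      else ereal (\<Sum>\<theta>\<in>{\<theta>\<in>\<Theta>. X \<theta> > 0}. X \<theta> * ln (X \<theta> / Y \<theta>)))"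

definition expect :: "'a set \<Rightarrow> ('a \<Rightarrow> real) \<Rightarrow> ('a \<Rightarrow> real) \<Rightarrow> real" where
  "expect \<Theta> P f = (\<Sum>\<theta>\<in>\<Theta>. P \<theta> * f \<theta>)"

definition selfpow :: "real \<Rightarrow> real" where
  "selfpow d = (if d = 0 then 1 else d powr d)"

definition kl_bound :: "real \<Rightarrow> real \<Rightarrow> real" where
  "kl_bound \<delta> \<kappa> =
     (if \<delta> = 1 then 0
      else ((selfpow \<delta> * exp (- \<kappa>)) powr (1 / (1 - \<delta>))) * (1 - \<delta>))"

end

theory Submission
  imports Defs
begin

text \<open>Splitting the sum defining the divergence along the weights f and 1 - f and bounding
  each part from below by the log-sum inequality (data processing onto the two events f, 1 - f)
  gives (1 - \<delta>) ln ((1 - \<delta>) / p) + \<delta> ln \<delta> \<le> \<kappa>, where p is the expectation of f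
  under Y; solving for p yields the bound. Positivity of p comes from absolute continuity of X
  w.r.t. Y, which finiteness of the divergence forces.\<close>

lemma ln_ratio_tangent_bound:
  fixes x y c :: real
  assumes "x > 0" "y > 0" "c > 0"
  shows "x * ln c + x - y * c \<le> x * ln (x / y)"
proof -
  have "x * ln (y * c / x) \<le> x * (y * c / x - 1)"
    using assms by (intro mult_left_mono ln_le_minus_one) auto
  also have "\<dots> = y * c - x" using assms by (simp add: field_simps)
  finally have "x * ln (y * c / x) \<le> y * c - x" .
  moreover have "ln (x / y) = ln c - ln (y * c / x)"
    using assms by (simp add: ln_div ln_mult)
  ultimately show ?thesis by (simp add: right_diff_distrib)
qed

lemma weighted_log_sum_ge:
  fixes X Y w :: "'a \<Rightarrow> real"
  assumes "finite S" and "\<And>t. t \<in> S \<Longrightarrow> X t > 0 \<and> Y t > 0 \<and> w t \<ge> 0"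
    and "(\<Sum>t\<in>S. w t * Y t) \<le> B" and "B > 0"
  shows "(\<Sum>t\<in>S. w t * X t) * ln ((\<Sum>t\<in>S. w t * X t) / B)
           \<le> (\<Sum>t\<in>S. w t * (X t * ln (X t / Y t)))"
    (is "?a * ln (?a / B) \<le> ?kl")
proof -
  have wX: "0 \<le> w t * X t" if "t \<in> S" for t
    using assms(2)[OF that] by simp
  show ?thesis
  proof (cases "?a = 0")
    case True
    with wX have "\<forall>t\<in>S. w t * X t = 0"
      using sum_nonneg_eq_0_iff[of S "\<lambda>t. w t * X t", OF assms(1)] by simp
    then have "?kl = 0"
      by (intro sum.neutral) (metis mult.assoc mult_zero_left)
    then show ?thesis using True by simp
  next
    case False
    have "?a \<ge> 0" using wX by (rule sum_nonneg)
    with False have "?a > 0" by simp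
    define c where "c = ?a / B"
    have c: "c > 0" using \<open>?a > 0\<close> assms(4) by (simp add: c_def)
    have "(\<Sum>t\<in>S. w t * (X t * ln c + X t - Y t * c)) \<le> ?kl"
      using assms(2) ln_ratio_tangent_bound[OF _ _ c] by (intro sum_mono mult_left_mono) auto
    moreover have "(\<Sum>t\<in>S. w t * (X t * ln c + X t - Y t * c))
        = ?a * ln c + ?a - c * (\<Sum>t\<in>S. w t * Y t)"
      by (simp add: algebra_simps sum.distrib sum_subtractf sum_distrib_left)
    moreover have "c * (\<Sum>t\<in>S. w t * Y t) \<le> c * B"
      using assms(3) c by (intro mult_left_mono) auto
    moreover have "c * B = ?a" using assms(4) by (simp add: c_def)
    ultimately show ?thesis by (simp add: c_def)
  qed
qed

lemma KL_le_ereal_D: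
  assumes "KL \<Theta> X Y \<le> ereal \<kappa>" and "\<And>t. t \<in> \<Theta> \<Longrightarrow> Y t \<ge> 0"
  shows "\<And>t. t \<in> \<Theta> \<Longrightarrow> X t > 0 \<Longrightarrow> Y t > 0"
    and "(\<Sum>t\<in>{t\<in>\<Theta>. X t > 0}. X t * ln (X t / Y t)) \<le> \<kappa>"
proof -
  have "\<not> (\<exists>t\<in>\<Theta>. X t > 0 \<and> Y t = 0)"
    using assms(1) by (auto simp: KL_def split: if_splits)
  then show "\<And>t. t \<in> \<Theta> \<Longrightarrow> X t > 0 \<Longrightarrow> Y t > 0"
    using assms(2) by (force simp: order.order_iff_strict)
  show "(\<Sum>t\<in>{t\<in>\<Theta>. X t > 0}. X t * ln (X t / Y t)) \<le> \<kappa>"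
    using assms(1) \<open>\<not> _\<close> by (simp add: KL_def)
qed

lemma expect_pos_of_abs_cont:
  assumes "finite \<Theta>" and "\<And>t. t \<in> \<Theta> \<Longrightarrow> X t \<ge> 0 \<and> Y t \<ge> 0 \<and> f t \<ge> 0"
    and "\<And>t. t \<in> \<Theta> \<Longrightarrow> X t > 0 \<Longrightarrow> Y t > 0"
    and "expect \<Theta> X f > 0"
  shows "expect \<Theta> Y f > 0"
proof -
  obtain t where t: "t \<in> \<Theta>" "X t * f t > 0"
    using assms(4) sum_nonpos[of \<Theta> "\<lambda>t. X t * f t"] unfolding expect_def by force
  then have "X t > 0" "f t > 0"
    using assms(2)[OF t(1)] by (auto simp: zero_less_mult_iff)
  then have "0 < Y t * f t" using assms(3) t(1) by simp
  also have "\<dots> \<le> expect \<Theta> Y f"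
    unfolding expect_def using assms(1,2) t(1) by (intro member_le_sum) auto
  finally show ?thesis .
qed

lemma kl_sum_ge_binary_split:
  assumes "is_distr \<Theta> X" and "is_distr \<Theta> Y"
    and "\<And>t. t \<in> \<Theta> \<Longrightarrow> 0 \<le> f t \<and> f t \<le> 1"
    and "\<And>t. t \<in> \<Theta> \<Longrightarrow> X t > 0 \<Longrightarrow> Y t > 0"
    and "expect \<Theta> Y f > 0"
  defines "a \<equiv> expect \<Theta> X f"
  shows "a * ln (a / expect \<Theta> Y f) + (1 - a) * ln (1 - a)
           \<le> (\<Sum>t\<in>{t\<in>\<Theta>. X t > 0}. X t * ln (X t / Y t))"
proof -
  define S where "S = {t\<in>\<Theta>. X t > 0}"
  have fin: "finite \<Theta>" and X: "\<And>t. t \<in> \<Theta> \<Longrightarrow> X t \<ge> 0" and "sum X \<Theta> = 1"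
    and Y: "\<And>t. t \<in> \<Theta> \<Longrightarrow> Y t \<ge> 0" and "sum Y \<Theta> = 1"
    using assms(1,2) by (auto simp: is_distr_def)
  have S: "S \<subseteq> \<Theta>" "finite S" using fin by (auto simp: S_def)
  have pos: "\<And>t. t \<in> S \<Longrightarrow> X t > 0 \<and> Y t > 0" using assms(4) by (auto simp: S_def)
  have sum_S: "(\<Sum>t\<in>S. g t * X t) = (\<Sum>t\<in>\<Theta>. X t * g t)" for g
    using fin X by (intro sum.mono_neutral_cong_left) (auto simp: S_def order.order_iff_strict)
  have a: "(\<Sum>t\<in>S. f t * X t) = a" and one_minus_a: "(\<Sum>t\<in>S. (1 - f t) * X t) = 1 - a"
    using sum_S[of f] sum_S[of "\<lambda>t. 1 - f t"] \<open>sum X \<Theta> = 1\<close>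
    by (simp_all add: a_def expect_def algebra_simps sum_subtractf)
  have weight_f: "\<And>t. t \<in> S \<Longrightarrow> X t > 0 \<and> Y t > 0 \<and> f t \<ge> 0"
    and weight_1f: "\<And>t. t \<in> S \<Longrightarrow> X t > 0 \<and> Y t > 0 \<and> 1 - f t \<ge> 0"
    using pos S(1) assms(3) by auto
  have "(\<Sum>t\<in>S. f t * Y t) \<le> expect \<Theta> Y f"
    unfolding expect_def using S fin Y assms(3) by (subst mult.commute) (intro sum_mono2, auto)
  from weighted_log_sum_ge[OF S(2) weight_f this assms(5)]
  have part_f: "a * ln (a / expect \<Theta> Y f) \<le> (\<Sum>t\<in>S. f t * (X t * ln (X t / Y t)))"
    unfolding a .
  have "(\<Sum>t\<in>S. (1 - f t) * Y t) \<le> (\<Sum>t\<in>S. Y t)"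
    using weight_f weight_1f by (intro sum_mono) (simp add: mult_left_le_one_le)
  also have "\<dots> \<le> 1"
    using sum_mono2[OF fin S(1), of Y] Y \<open>sum Y \<Theta> = 1\<close> by simp
  finally have "(\<Sum>t\<in>S. (1 - f t) * Y t) \<le> 1" .
  from weighted_log_sum_ge[OF S(2) weight_1f this zero_less_one]
  have part_1f: "(1 - a) * ln (1 - a) \<le> (\<Sum>t\<in>S. (1 - f t) * (X t * ln (X t / Y t)))"
    unfolding one_minus_a by simp
  have "(\<Sum>t\<in>S. X t * ln (X t / Y t)) = (\<Sum>t\<in>S. f t * (X t * ln (X t / Y t)))
      + (\<Sum>t\<in>S. (1 - f t) * (X t * ln (X t / Y t)))"
    by (simp add: sum.distrib[symmetric] algebra_simps)
  with part_f part_1f show ?thesis by (simp add: S_def)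
qed

lemma expect_between_0_1:
  assumes "is_distr \<Theta> P" and "\<And>t. t \<in> \<Theta> \<Longrightarrow> 0 \<le> f t \<and> f t \<le> 1"
  shows "0 \<le> expect \<Theta> P f" and "expect \<Theta> P f \<le> 1"
proof -
  have P: "\<And>t. t \<in> \<Theta> \<Longrightarrow> P t \<ge> 0" and "sum P \<Theta> = 1"
    using assms(1) by (auto simp: is_distr_def)
  show "0 \<le> expect \<Theta> P f"
    unfolding expect_def using P assms(2) by (intro sum_nonneg) auto
  have "expect \<Theta> P f \<le> sum P \<Theta>"
    unfolding expect_def using P assms(2) by (intro sum_mono mult_left_le) auto
  with \<open>sum P \<Theta> = 1\<close> show "expect \<Theta> P f \<le> 1" by simp
qed

lemma selfpow_eq_exp: "d \<ge> 0 \<Longrightarrow> selfpow d = exp (d * ln d)"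
  by (auto simp: selfpow_def powr_def)

lemma kl_bound_le:
  assumes "0 \<le> \<delta>" "\<delta> < 1" "p > 0"
    and "(1 - \<delta>) * ln ((1 - \<delta>) / p) + \<delta> * ln \<delta> \<le> \<kappa>"
  shows "kl_bound \<delta> \<kappa> \<le> p"
proof -
  have "kl_bound \<delta> \<kappa> = exp ((\<delta> * ln \<delta> - \<kappa>) / (1 - \<delta>)) * (1 - \<delta>)"
    using assms(1,2) by (simp add: kl_bound_def selfpow_eq_exp powr_def mult_exp_exp)
  also have "\<dots> \<le> exp (- ln ((1 - \<delta>) / p)) * (1 - \<delta>)"
    using assms by (intro mult_right_mono) (auto simp: divide_le_eq algebra_simps)
  also have "\<dots> = p" using assms(2,3) by (simp add: exp_minus)
  finally show ?thesis .
qed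

theorem lemma5p2:
  fixes \<Theta> :: "'a set" and X Y f :: "'a \<Rightarrow> real" and \<kappa> \<delta> :: real
  assumes "finite \<Theta>"
    and "is_distr \<Theta> X" and "is_distr \<Theta> Y"
    and "KL \<Theta> X Y \<le> ereal \<kappa>"
    and "\<forall>\<theta>\<in>\<Theta>. 0 \<le> f \<theta> \<and> f \<theta> \<le> 1"
    and "expect \<Theta> X f = 1 - \<delta>"
  shows "expect \<Theta> Y f \<ge> kl_bound \<delta> \<kappa>"
proof -
  have f01: "\<And>t. t \<in> \<Theta> \<Longrightarrow> 0 \<le> f t \<and> f t \<le> 1" using assms(5) by blast
  have nonneg: "\<And>t. t \<in> \<Theta> \<Longrightarrow> X t \<ge> 0 \<and> Y t \<ge> 0 \<and> f t \<ge> 0"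
    using assms(2,3,5) by (auto simp: is_distr_def)
  then have abs_cont: "\<And>t. t \<in> \<Theta> \<Longrightarrow> X t > 0 \<Longrightarrow> Y t > 0"
    using KL_le_ereal_D(1)[OF assms(4)] by blast
  have KL_sum: "(\<Sum>t\<in>{t\<in>\<Theta>. X t > 0}. X t * ln (X t / Y t)) \<le> \<kappa>"
    using KL_le_ereal_D(2)[OF assms(4)] nonneg by blast
  have "0 \<le> \<delta>" "\<delta> \<le> 1"
    using expect_between_0_1[of \<Theta> X f] assms(2,6) f01 by auto
  show ?thesis
  proof (cases "\<delta> = 1")
    case True
    then show ?thesis
      using nonneg by (simp add: kl_bound_def expect_def sum_nonneg)
  next
    case False
    with \<open>\<delta> \<le> 1\<close> assms(6) have "\<delta> < 1" "expect \<Theta> X f > 0" by auto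
    then have p_pos: "expect \<Theta> Y f > 0"
      using expect_pos_of_abs_cont[of \<Theta> X Y f, OF assms(1) nonneg abs_cont] by blast
    have "(1 - \<delta>) * ln ((1 - \<delta>) / expect \<Theta> Y f) + \<delta> * ln \<delta> \<le> \<kappa>"
      using kl_sum_ge_binary_split[of \<Theta> X Y f, OF assms(2,3) f01 abs_cont p_pos] KL_sum assms(6)
      by simp
    then show ?thesis
      using kl_bound_le[of \<delta>] \<open>0 \<le> \<delta>\<close> \<open>\<delta> < 1\<close> p_pos by blast
  qed
qed

end
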